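(* Let $V:[0,+\infty)\to[0,+\infty)$ be a $C^1$ strictly increasing function with $\lim_{t\to\infty}V(t)=+\infty$, and let $S:=V'$. Let $(a_n)_{n\in\mathbb N}$ be a strictly decreasing sequence converging to $0$, and let $f:(0,+\infty)\to\mathbb R$ be a positive increasing $C^2$ function such that $\lim_{s\to\infty}f(s)=+\infty$, and such that for every $r>1$: $\lim_{s\to\infty}\frac{s f'(s)}{[f(s)]^r}=0$ and $s\mapsto\frac{f'(s)}{[f(s)]^r}$ is strictly decreasing. Define $\tilde\rho_n:(0,+\infty)\to\mathbb R$ by \[ \tilde\rho_n(t):=\frac{a_n\,f'(V(t))}{[f(V(t))]^{a_n+1}}. \] Then the functions $\tilde\rho_n$ belong to $C^1(0,+\infty)$, are strictly decreasing, and satisfy: (i) $\lim_{n\to\infty}\tilde\rho_n(r)=0$ for all $r>0$ and $\lim_{r\to+\infty}\tilde\rho_n(r)V(r)=0$ for all $n$; (ii) for all $n>m$, $r\mapsto\tilde\rho_n(r)/\tilde\rho_m(r)$ is non-decreasing on $(0,+\infty)$; (iii) $\lim_{R\to+\infty}\lim_{n\to\infty}\int_R^{+\infty}S(r)\tilde\rho_n(r)\,\mathrm dr=1$. Consequently, on any metric measure space $(X,\mathsf d,\mathfrak m)$ the mollifiers $\rho_n(x,y):=\tilde\rho_n(\mathsf d(x,y))$, $x\neq y$, satisfy approximation of the identity of radial type associated to $V$.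
   Context: Approximation of the identity of radial type associated to $V$ for functions $\rho_n$ on $\{(x,y)\in X\times X:x\neq y\}$ means: there are strictly decreasing $\tilde\rho_n\in C^1(0,+\infty)$ with $\rho_n(x,y)=\tilde\rho_n(\mathsf d(x,y))$ satisfying properties (i), (ii), (iii) listed in the claim. *)

theory Defs
  imports "HOL-Analysis.Analysis"
begin

definition C1_on :: "real set \<Rightarrow> (real \<Rightarrow> real) \<Rightarrow> bool" where
  "C1_on A g \<longleftrightarrow> (\<forall>x\<in>A. g differentiable (at x)) \<and> continuous_on A (deriv g)"

definition C2_on :: "real set \<Rightarrow> (real \<Rightarrow> real) \<Rightarrow> bool" where
  "C2_on A g \<longleftrightarrow> C1_on A g \<and> C1_on A (deriv g)"

definition approx_identity_radial ::
  "(real \<Rightarrow> real) \<Rightarrow> (real \<Rightarrow> real) \<Rightarrow> (nat \<Rightarrow> 'a::metric_space \<Rightarrow> 'a \<Rightarrow> real) \<Rightarrow> bool" where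
  "approx_identity_radial V S rho \<longleftrightarrow>
     (\<exists>rt :: nat \<Rightarrow> real \<Rightarrow> real.
        (\<forall>n. C1_on {0<..} (rt n)) \<and>
        (\<forall>n s t. 0 < s \<longrightarrow> s < t \<longrightarrow> rt n t < rt n s) \<and>
        (\<forall>n x y. x \<noteq> y \<longrightarrow> rho n x y = rt n (dist x y)) \<and>
        (\<forall>r>0. (\<lambda>n. rt n r) \<longlonglongrightarrow> 0) \<and>
        (\<forall>n. ((\<lambda>r. rt n r * V r) \<longlongrightarrow> 0) at_top) \<and>
        (\<forall>n m. m < n \<longrightarrow> mono_on {0<..} (\<lambda>r. rt n r / rt m r)) \<and>
        (\<forall>n. \<forall>R>0. set_integrable lborel {R..} (\<lambda>r. S r * rt n r)) \<and>
        (\<exists>L. (\<forall>R>0. (\<lambda>n. LBINT r:{R..}. S r * rt n r) \<longlonglongrightarrow> L R) \<and>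
             (L \<longlongrightarrow> 1) at_top))"

end

theory Submission
  imports Defs
begin

(* The integral condition rests on S * rho_n being an exact derivative:
   d/dt (- f (V t) powr (- a n)) = S t * rho_n t.  Since f (V t) tends to infinity, the integral of
   S * rho_n over [R, oo) is f (V R) powr (- a n), which tends to 1 as a n tends to 0, for every R.
   Everything else is pointwise: rho_n decreases because f' / f powr r does and V increases;
   rho_n / rho_m = (a n / a m) * f (V t) powr (a m - a n) is nondecreasing because f is; and
   rho_n * V tends to 0 by the hypothesis on s f'(s) / f(s) powr r, composed with V. *)

lemma C1_onI:
  assumes "\<And>x. x \<in> A \<Longrightarrow> (g has_real_derivative g' x) (at x)" and "continuous_on A g'"
  shows "C1_on A g"
proof -
  have "continuous_on A (deriv g)"
    using assms(2) by (rule continuous_on_cong[THEN iffD1, rotated 2])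
      (auto intro: DERIV_imp_deriv[OF assms(1), symmetric])
  then show ?thesis
    unfolding C1_on_def using assms(1) by (auto simp: real_differentiable_def)
qed

lemma C1_on_has_real_derivative:
  "C1_on A g \<Longrightarrow> x \<in> A \<Longrightarrow> (g has_real_derivative deriv g x) (at x)"
  unfolding C1_on_def by (simp add: DERIV_deriv_iff_real_differentiable)

lemma C1_on_imp_continuous_on: "C1_on A g \<Longrightarrow> continuous_on A g"
  by (metis continuous_at_imp_continuous_on DERIV_isCont C1_on_has_real_derivative)

lemma strict_decseq_tendsto_zero_pos:
  fixes a :: "nat \<Rightarrow> real"
  assumes "\<And>n. a (Suc n) < a n" and "a \<longlonglongrightarrow> 0"
  shows "0 < a n"
proof -
  have "decseq a" using assms(1) by (intro decseq_SucI less_imp_le)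
  then have "0 \<le> a (Suc n)" using decseq_ge assms(2) by blast
  then show ?thesis using assms(1)[of n] by linarith
qed

lemma set_integral_Ici_eq_Ioi:
  fixes g :: "real \<Rightarrow> real"
  assumes "set_integrable lborel {c<..} g"
  shows "set_integrable lborel {c..} g" and "(LBINT x:{c..}. g x) = (LBINT x:{c<..}. g x)"
proof -
  have "AE x in lborel. x \<noteq> c" by (rule AE_lborel_singleton)
  then have ae: "AE x in lborel. indicator {c..} x *\<^sub>R g x = indicator {c<..} x *\<^sub>R g x"
    by eventually_elim (auto split: split_indicator)
  have meas_Ioi: "(\<lambda>x. indicator {c<..} x *\<^sub>R g x) \<in> borel_measurable lborel"
    using assms unfolding set_integrable_def by (rule borel_measurable_integrable)
  have "(\<lambda>x. indicator {c..} x *\<^sub>R g x) = (\<lambda>x. indicator {c<..} x *\<^sub>R g x + indicator {c} x *\<^sub>R g c)"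
    by (rule ext) (auto split: split_indicator)
  then have meas_Ici: "(\<lambda>x. indicator {c..} x *\<^sub>R g x) \<in> borel_measurable lborel"
    using meas_Ioi by simp
  show "set_integrable lborel {c..} g"
    using assms integrable_cong_AE[OF meas_Ici meas_Ioi ae] unfolding set_integrable_def by simp
  show "(LBINT x:{c..}. g x) = (LBINT x:{c<..}. g x)"
    unfolding set_lebesgue_integral_def by (rule integral_cong_AE[OF meas_Ici meas_Ioi ae])
qed

lemma set_integral_Ici_FTC_nonneg:
  fixes F g :: "real \<Rightarrow> real"
  assumes deriv: "\<And>x. c \<le> x \<Longrightarrow> (F has_real_derivative g x) (at x)"
    and cont: "\<And>x. c \<le> x \<Longrightarrow> isCont g x"
    and nonneg: "\<And>x. c \<le> x \<Longrightarrow> 0 \<le> g x"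
    and lim: "(F \<longlongrightarrow> L) at_top"
  shows "set_integrable lborel {c..} g" and "(LBINT x:{c..}. g x) = L - F c"
proof -
  have "((F \<circ> real_of_ereal) \<longlongrightarrow> F c) (at_right (ereal c))"
    using DERIV_isCont[OF deriv[of c]]
    by (simp add: ereal_tendsto_simps isCont_def filterlim_at_split)
  moreover have "((F \<circ> real_of_ereal) \<longlongrightarrow> L) (at_left \<infinity>)"
    using lim by (simp add: ereal_tendsto_simps)
  moreover have "AE x in lborel. ereal c < ereal x \<longrightarrow> ereal x < \<infinity> \<longrightarrow> 0 \<le> g x"
    using nonneg by (intro AE_I2) simp
  ultimately have "set_integrable lborel {c<..} g \<and> (LBINT x:{c<..}. g x) = L - F c"
    using interval_integral_FTC_nonneg[of "ereal c" \<infinity> F g "F c" L] deriv cont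
    by (simp add: einterval_eq_Ici interval_integral_to_infinity_eq)
  then show "set_integrable lborel {c..} g" "(LBINT x:{c..}. g x) = L - F c"
    by (simp_all add: set_integral_Ici_eq_Ioi)
qed

definition radial_mollifier :: "(real \<Rightarrow> real) \<Rightarrow> (real \<Rightarrow> real) \<Rightarrow> real \<Rightarrow> real \<Rightarrow> real" where
  "radial_mollifier f V c t = c * deriv f (V t) / f (V t) powr (c + 1)"

locale radial_profile =
  fixes V S f :: "real \<Rightarrow> real"
  assumes V_pos: "\<And>t. 0 < t \<Longrightarrow> 0 < V t"
    and V_deriv: "\<And>t. 0 < t \<Longrightarrow> (V has_real_derivative S t) (at t)"
    and S_cont: "continuous_on {0<..} S"
    and V_strict_mono: "strict_mono_on {0<..} V"
    and V_at_top: "filterlim V at_top at_top"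
    and f_pos: "\<And>s. 0 < s \<Longrightarrow> 0 < f s"
    and f_mono: "mono_on {0<..} f"
    and f_C2: "C2_on {0<..} f"
    and f_at_top: "filterlim f at_top at_top"
    and f_tail: "\<And>r. 1 < r \<Longrightarrow> ((\<lambda>s. s * deriv f s / f s powr r) \<longlongrightarrow> 0) at_top"
    and f_quotient_strict_antimono:
      "\<And>r. 1 < r \<Longrightarrow> strict_antimono_on {0<..} (\<lambda>s. deriv f s / f s powr r)"
begin

lemma fV_pos: "0 < t \<Longrightarrow> 0 < f (V t)"
  by (simp add: V_pos f_pos)

lemma S_nonneg:
  assumes "0 < t"
  shows "0 \<le> S t"
proof (rule mono_on_imp_deriv_nonneg[OF _ V_deriv[OF assms]])
  show "mono_on {0<..} V"
    using V_strict_mono by (rule strict_mono_on_imp_mono_on)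
  show "t \<in> interior {0<..}"
    using assms by (simp add: interior_open)
qed

lemma f_has_deriv: "0 < s \<Longrightarrow> (f has_real_derivative deriv f s) (at s)"
  using f_C2 unfolding C2_on_def by (auto intro: C1_on_has_real_derivative)

lemma deriv_f_has_deriv: "0 < s \<Longrightarrow> (deriv f has_real_derivative deriv (deriv f) s) (at s)"
  using f_C2 unfolding C2_on_def by (auto intro: C1_on_has_real_derivative)

lemma deriv_f_pos:
  assumes "0 < s"
  shows "0 < deriv f s"
proof -
  \<comment> \<open>Monotonicity of f only gives f' \<ge> 0; strictness comes from the strict decrease of f' / f powr 2.\<close>
  have "0 \<le> deriv f (s + 1)"
    using mono_on_imp_deriv_nonneg[OF f_mono f_has_deriv] assms by (simp add: interior_open)
  moreover have "deriv f (s + 1) / f (s + 1) powr 2 < deriv f s / f s powr 2"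
    using f_quotient_strict_antimono[of 2] assms by (simp add: monotone_on_def)
  ultimately have "0 < deriv f s / f s powr 2"
    using assms f_pos[of "s + 1"] by (smt (verit) divide_nonneg_pos powr_gt_zero)
  then show ?thesis
    using assms f_pos[of s] by (simp add: zero_less_divide_iff)
qed

lemma fV_has_deriv: "0 < t \<Longrightarrow> ((\<lambda>t. f (V t)) has_real_derivative deriv f (V t) * S t) (at t)"
  by (rule DERIV_chain2[OF f_has_deriv[OF V_pos] V_deriv])

lemma deriv_fV_has_deriv:
  "0 < t \<Longrightarrow> ((\<lambda>t. deriv f (V t)) has_real_derivative deriv (deriv f) (V t) * S t) (at t)"
  by (rule DERIV_chain2[OF deriv_f_has_deriv[OF V_pos] V_deriv])

lemma radial_mollifier_pos:
  assumes "0 < c" and "0 < t"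
  shows "0 < radial_mollifier f V c t"
  unfolding radial_mollifier_def
  using assms fV_pos[OF assms(2)] by (intro divide_pos_pos mult_pos_pos deriv_f_pos V_pos) auto

lemma radial_mollifier_strict_antimono:
  assumes "0 < c" and "0 < s" and "s < t"
  shows "radial_mollifier f V c t < radial_mollifier f V c s"
proof -
  have "V s < V t" and "0 < V s"
    using V_strict_mono assms by (auto simp: monotone_on_def V_pos)
  then have "deriv f (V t) / f (V t) powr (c + 1) < deriv f (V s) / f (V s) powr (c + 1)"
    using f_quotient_strict_antimono[of "c + 1"] assms(1) by (simp add: monotone_on_def)
  then show ?thesis
    unfolding radial_mollifier_def times_divide_eq_right[symmetric]
    using assms(1) by (rule mult_strict_left_mono)
qed

lemma radial_mollifier_has_deriv:
  assumes "0 < t"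
  shows "(radial_mollifier f V c has_real_derivative
      c * S t * (deriv (deriv f) (V t) * f (V t) - (c + 1) * deriv f (V t) ^ 2)
        / f (V t) powr (c + 2)) (at t)"
proof -
  define p where "p = f (V t)"
  have p: "0 < p" using fV_pos[OF assms] by (simp add: p_def)
  have quotient_rule: "(radial_mollifier f V c has_real_derivative
      (c * (deriv (deriv f) (V t) * S t) * p powr (c + 1)
        - c * deriv f (V t) * ((c + 1) * p powr (c + 1 - of_nat 1) * (deriv f (V t) * S t)))
      / (p powr (c + 1) * p powr (c + 1))) (at t)"
    unfolding radial_mollifier_def[abs_def] p_def
    by (rule DERIV_divide[OF DERIV_cmult[OF deriv_fV_has_deriv[OF assms]]
          DERIV_fun_powr[OF fV_has_deriv[OF assms]]]) (use p in \<open>simp_all add: p_def\<close>)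
  have powers: "p powr (c + 1) = p powr c * p" "p powr (c + 2) = p powr c * p\<^sup>2"
    using p by (simp_all add: powr_add)
  show ?thesis
    using quotient_rule unfolding p_def[symmetric] powers of_nat_1 add_diff_cancel_right'
    by (rule DERIV_cong) (use p in \<open>simp add: field_simps power2_eq_square\<close>)
qed

lemma radial_mollifier_C1: "C1_on {0<..} (radial_mollifier f V c)"
proof (rule C1_onI)
  show "(radial_mollifier f V c has_real_derivative
      c * S t * (deriv (deriv f) (V t) * f (V t) - (c + 1) * deriv f (V t) ^ 2)
        / f (V t) powr (c + 2)) (at t)" if "t \<in> {0<..}" for t
    using that by (simp add: radial_mollifier_has_deriv)
  have "continuous_on {0<..} V"
    using V_deriv by (intro continuous_at_imp_continuous_on ballI DERIV_isCont) auto
  moreover have "V ` {0<..} \<subseteq> {0<..}"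
    using V_pos by auto
  moreover have "continuous_on {0<..} f" "continuous_on {0<..} (deriv f)"
    "continuous_on {0<..} (deriv (deriv f))"
    using f_C2 by (auto simp: C2_on_def C1_on_def intro: C1_on_imp_continuous_on)
  ultimately have "continuous_on {0<..} (\<lambda>t. f (V t))" "continuous_on {0<..} (\<lambda>t. deriv f (V t))"
    "continuous_on {0<..} (\<lambda>t. deriv (deriv f) (V t))"
    by (auto intro: continuous_on_compose2)
  then show "continuous_on {0<..} (\<lambda>t. c * S t * (deriv (deriv f) (V t) * f (V t)
      - (c + 1) * deriv f (V t) ^ 2) / f (V t) powr (c + 2))"
    using fV_pos by (intro continuous_intros S_cont) (simp_all add: less_imp_neq[symmetric])
qed

lemma radial_mollifier_tendsto_zero:
  assumes "(g \<longlongrightarrow> 0) F" and "0 < t"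
  shows "((\<lambda>x. radial_mollifier f V (g x) t) \<longlongrightarrow> 0) F"
proof -
  have "((\<lambda>x. g x * deriv f (V t) / f (V t) powr (g x + 1))
      \<longlongrightarrow> 0 * deriv f (V t) / f (V t) powr (0 + 1)) F"
    using fV_pos[OF assms(2)] by (intro tendsto_intros assms(1)) auto
  then show ?thesis
    by (simp add: radial_mollifier_def)
qed

lemma radial_mollifier_times_V_tendsto_zero:
  assumes "0 < c"
  shows "((\<lambda>t. radial_mollifier f V c t * V t) \<longlongrightarrow> 0) at_top"
proof -
  have "((\<lambda>t. V t * deriv f (V t) / f (V t) powr (c + 1)) \<longlongrightarrow> 0) at_top"
    using filterlim_compose[OF f_tail V_at_top] assms by simp
  from tendsto_mult_left[OF this, of c] show ?thesis
    by (simp add: radial_mollifier_def mult_ac)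
qed

lemma radial_mollifier_ratio:
  assumes "0 < t"
  shows "radial_mollifier f V c t / radial_mollifier f V d t = c / d * f (V t) powr (d - c)"
proof (cases "d = 0")
  case False
  define p where "p = f (V t)"
  have "0 < p" using fV_pos[OF assms] by (simp add: p_def)
  moreover have "0 < deriv f (V t)"
    using deriv_f_pos[OF V_pos[OF assms]] .
  ultimately have "radial_mollifier f V c t / radial_mollifier f V d t
      = c / d * (p powr (d + 1) / p powr (c + 1))"
    using False unfolding radial_mollifier_def p_def[symmetric] by (simp add: field_simps)
  also have "p powr (d + 1) / p powr (c + 1) = p powr (d - c)"
    by (simp add: powr_diff[symmetric])
  finally show ?thesis
    by (simp add: p_def)
qed (simp add: radial_mollifier_def)

lemma radial_mollifier_ratio_mono:
  assumes "0 \<le> c" and "c \<le> d"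
  shows "mono_on {0<..} (\<lambda>t. radial_mollifier f V c t / radial_mollifier f V d t)"
proof (rule mono_onI)
  fix s t :: real
  assume "s \<in> {0<..}" "t \<in> {0<..}" "s \<le> t"
  then have "0 < s" "0 < t" "V s \<le> V t"
    using V_strict_mono by (auto simp: strict_mono_on_leD)
  then have "f (V s) powr (d - c) \<le> f (V t) powr (d - c)"
    using assms by (intro powr_mono2 mono_onD[OF f_mono]) (auto simp: V_pos fV_pos less_imp_le)
  moreover have "0 \<le> c / d"
    using assms by simp
  ultimately show "radial_mollifier f V c s / radial_mollifier f V d s
      \<le> radial_mollifier f V c t / radial_mollifier f V d t"
    unfolding radial_mollifier_ratio[OF \<open>0 < s\<close>] radial_mollifier_ratio[OF \<open>0 < t\<close>]
    by (rule mult_left_mono)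
qed

lemma radial_mollifier_antiderivative:
  assumes "0 < t"
  shows "((\<lambda>t. - (f (V t) powr (- c))) has_real_derivative S t * radial_mollifier f V c t) (at t)"
proof -
  have "((\<lambda>t. - (f (V t) powr (- c))) has_real_derivative
      - (- c * f (V t) powr (- c - of_nat 1) * (deriv f (V t) * S t))) (at t)"
    by (intro DERIV_minus DERIV_fun_powr fV_has_deriv fV_pos assms)
  moreover have "f (V t) powr (- c - 1) = inverse (f (V t) powr (c + 1))"
    by (simp add: powr_minus[symmetric])
  ultimately show ?thesis
    by (simp add: radial_mollifier_def divide_inverse mult_ac)
qed

lemma radial_mollifier_integral:
  assumes "0 < c" and "0 < R"
  shows "set_integrable lborel {R..} (\<lambda>t. S t * radial_mollifier f V c t)"
    and "(LBINT t:{R..}. S t * radial_mollifier f V c t) = f (V R) powr (- c)"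
proof -
  have "((\<lambda>t. f (V t) powr (- c)) \<longlongrightarrow> 0) at_top"
    using assms(1) filterlim_compose[OF f_at_top V_at_top] by (intro tendsto_neg_powr) auto
  then have lim: "((\<lambda>t. - (f (V t) powr (- c))) \<longlongrightarrow> - 0) at_top"
    by (rule tendsto_minus)
  have cont: "isCont (\<lambda>t. S t * radial_mollifier f V c t) t" if "0 < t" for t
    using continuous_on_mult[OF S_cont C1_on_imp_continuous_on[OF radial_mollifier_C1]] that
    by (simp add: continuous_on_eq_continuous_at)
  note FTC = set_integral_Ici_FTC_nonneg[of R _ "\<lambda>t. S t * radial_mollifier f V c t", OF
      radial_mollifier_antiderivative cont _ lim]
  have nonneg: "0 \<le> S t * radial_mollifier f V c t" if "0 < t" for t
    using S_nonneg radial_mollifier_pos assms(1) that by (simp add: less_imp_le)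
  show "set_integrable lborel {R..} (\<lambda>t. S t * radial_mollifier f V c t)"
    "(LBINT t:{R..}. S t * radial_mollifier f V c t) = f (V R) powr (- c)"
    using FTC assms nonneg by auto
qed

end

theorem mainTheorem3:
  fixes V S :: "real \<Rightarrow> real" and a :: "nat \<Rightarrow> real" and f :: "real \<Rightarrow> real"
    and \<rho> :: "nat \<Rightarrow> real \<Rightarrow> real"
  assumes V_nonneg: "\<forall>t\<ge>0. V t \<ge> 0"
    and V_deriv: "\<forall>t\<ge>0. (V has_real_derivative S t) (at t within {0..})"
    and S_cont: "continuous_on {0..} S"
    and V_strict: "\<forall>s t. 0 \<le> s \<longrightarrow> s < t \<longrightarrow> V s < V t"
    and V_lim: "filterlim V at_top at_top"
    and a_strict: "\<forall>n. a (Suc n) < a n"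
    and a_lim: "a \<longlonglongrightarrow> 0"
    and f_pos: "\<forall>s>0. f s > 0"
    and f_mono: "mono_on {0<..} f"
    and f_C2: "C2_on {0<..} f"
    and f_lim: "filterlim f at_top at_top"
    and f_lim2: "\<forall>r>1. ((\<lambda>s. s * deriv f s / (f s) powr r) \<longlongrightarrow> 0) at_top"
    and f_dec: "\<forall>r>1. \<forall>s t. 0 < s \<longrightarrow> s < t \<longrightarrow>
                   deriv f t / (f t) powr r < deriv f s / (f s) powr r"
    and \<rho>_def: "\<forall>n t. \<rho> n t = a n * deriv f (V t) / (f (V t)) powr (a n + 1)"
  shows "(\<forall>n. C1_on {0<..} (\<rho> n)) \<and>
         (\<forall>n s t. 0 < s \<longrightarrow> s < t \<longrightarrow> \<rho> n t < \<rho> n s) \<and>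
         (\<forall>r>0. (\<lambda>n. \<rho> n r) \<longlonglongrightarrow> 0) \<and>
         (\<forall>n. ((\<lambda>r. \<rho> n r * V r) \<longlongrightarrow> 0) at_top) \<and>
         (\<forall>n m. m < n \<longrightarrow> mono_on {0<..} (\<lambda>r. \<rho> n r / \<rho> m r)) \<and>
         (\<forall>n. \<forall>R>0. set_integrable lborel {R..} (\<lambda>r. S r * \<rho> n r)) \<and>
         (\<exists>L. (\<forall>R>0. (\<lambda>n. LBINT r:{R..}. S r * \<rho> n r) \<longlonglongrightarrow> L R) \<and>
              (L \<longlongrightarrow> 1) at_top) \<and>
         (\<forall>rho :: nat \<Rightarrow> 'a::metric_space \<Rightarrow> 'a \<Rightarrow> real.
            (\<forall>n x y. x \<noteq> y \<longrightarrow> rho n x y = \<rho> n (dist x y)) \<longrightarrow>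
            approx_identity_radial V S rho)"
proof -
  have V_pos: "0 < V t" if "0 < t" for t
    using V_nonneg V_strict that by (meson order.refl order_le_less_trans)
  interpret radial_profile V S f
  proof
    show "(V has_real_derivative S t) (at t)" if "0 < t" for t
      using V_deriv[rule_format, of t] that at_within_interior[of t "{0..}"] by simp
    show "continuous_on {0<..} S"
      using S_cont by (rule continuous_on_subset) auto
    show "strict_mono_on {0<..} V"
      using V_strict by (auto simp: monotone_on_def)
    show "strict_antimono_on {0<..} (\<lambda>s. deriv f s / f s powr r)" if "1 < r" for r
      using f_dec that by (auto simp: monotone_on_def)
  qed (simp_all add: V_pos V_lim f_pos f_mono f_C2 f_lim f_lim2)
  have a_pos: "0 < a n" for n
    using a_strict a_lim by (intro strict_decseq_tendsto_zero_pos) auto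
  have a_less: "a n < a m" if "m < n" for m n
    using lift_Suc_mono_less[of "\<lambda>n. - a n" m n] a_strict that by simp
  have \<rho>_eq: "\<rho> n = radial_mollifier f V (a n)" for n
    using \<rho>_def by (simp add: fun_eq_iff radial_mollifier_def)
  have integral_limit: "(\<lambda>n. LBINT r:{R..}. S r * \<rho> n r) \<longlonglongrightarrow> 1" if "0 < R" for R
  proof -
    have "(\<lambda>n. f (V R) powr (- a n)) \<longlonglongrightarrow> f (V R) powr (- 0)"
      using fV_pos[OF that] by (intro tendsto_intros a_lim) auto
    then show ?thesis
      using that a_pos fV_pos[OF that] by (simp add: \<rho>_eq radial_mollifier_integral)
  qed
  show ?thesis
    unfolding approx_identity_radial_def \<rho>_eq
    using a_pos a_less integral_limit[unfolded \<rho>_eq]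
    by (auto intro!: exI[of _ "\<lambda>_. 1"] exI[of _ "\<lambda>n. radial_mollifier f V (a n)"]
        radial_mollifier_C1 radial_mollifier_strict_antimono
        radial_mollifier_tendsto_zero[OF a_lim] radial_mollifier_times_V_tendsto_zero
        radial_mollifier_ratio_mono radial_mollifier_integral less_imp_le)
qed

end
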